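(* Let $W_i=V_i\epsilon_i$, $i=1,\dots,n$, with $V_i\sim\mathcal M[\underline\sigma,\overline\sigma]$ and $\epsilon_i\sim N(0,1)$. Then $$V_1\dashrightarrow\epsilon_1\dashrightarrow V_2\dashrightarrow\epsilon_2\dashrightarrow\cdots\dashrightarrow V_n\dashrightarrow\epsilon_n$$ holds if and only if both (F1) $(V_1,\epsilon_1)\dashrightarrow(V_2,\epsilon_2)\dashrightarrow\cdots\dashrightarrow(V_n,\epsilon_n)$ and (F2) $V_i\dashrightarrow\epsilon_i$ for $i=1,\dots,n$ hold.
   Context: Sublinear expectation space $(\Omega,\mathcal H,\hat{\mathbb E})$, $\hat{\mathbb E}[X]=\sup_{Q\in\mathcal P}E_Q[X]$. $C_{b,Lip}$: bounded Lipschitz functions. For random vectors $X,Y$, $X\dashrightarrow Y$ ($Y$ independent from $X$) means $\hat{\mathbb E}[\varphi(X,Y)]=\hat{\mathbb E}[\hat{\mathbb E}[\varphi(x,Y)]_{x=X}]$ for all $\varphi\in C_{b,Lip}$; $X_1\dashrightarrow\cdots\dashrightarrow X_n$ means $(X_1,\dots,X_i)\dashrightarrow X_{i+1}$ for $i=1,\dots,n-1$. $V\sim\mathcal M[\underline\sigma,\overline\sigma]$: $\hat{\mathbb E}[\varphi(V)]=\max_{v\in[\underline\sigma,\overline\sigma]}\varphi(v)$ for locally Lipschitz-growth $\varphi$. $\epsilon\sim N(0,1)$: $\hat{\mathbb E}[\varphi(\epsilon)]=E[\varphi(Z)]$, $Z$ classical standard normal. *)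

theory Defs
  imports "HOL-Probability.Probability"
begin

definition sublin_E :: "'w measure set \<Rightarrow> ('w \<Rightarrow> real) \<Rightarrow> real" where
  "sublin_E P X = (SUP Q\<in>P. integral\<^sup>L Q X)"

definition list_dist :: "real list \<Rightarrow> real list \<Rightarrow> real" where
  "list_dist x y = sqrt (\<Sum>i<length x. (x ! i - y ! i)\<^sup>2)"

definition cblip :: "nat \<Rightarrow> (real list \<Rightarrow> real) \<Rightarrow> bool" where
  "cblip d \<phi> \<longleftrightarrow>
     (\<exists>B. \<forall>x. length x = d \<longrightarrow> \<bar>\<phi> x\<bar> \<le> B) \<and>
     (\<exists>L. \<forall>x y. length x = d \<longrightarrow> length y = d \<longrightarrow> \<bar>\<phi> x - \<phi> y\<bar> \<le> L * list_dist x y)"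

definition loc_lip_growth :: "(real \<Rightarrow> real) \<Rightarrow> bool" where
  "loc_lip_growth \<phi> \<longleftrightarrow>
     (\<exists>C k. \<forall>x y. \<bar>\<phi> x - \<phi> y\<bar> \<le> C * (1 + \<bar>x\<bar> ^ k + \<bar>y\<bar> ^ k) * \<bar>x - y\<bar>)"

text \<open>Y (dimension n) is independent from X (dimension m): X \<dashrightarrow> Y.\<close>
definition sl_indep ::
  "'w measure set \<Rightarrow> ('w \<Rightarrow> real list) \<Rightarrow> nat \<Rightarrow> ('w \<Rightarrow> real list) \<Rightarrow> nat \<Rightarrow> bool" where
  "sl_indep P X m Y n \<longleftrightarrow>
     (\<forall>\<phi>. cblip (m + n) \<phi> \<longrightarrow>
        sublin_E P (\<lambda>\<omega>. \<phi> (X \<omega> @ Y \<omega>)) =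
        sublin_E P (\<lambda>\<omega>. sublin_E P (\<lambda>\<omega>'. \<phi> (X \<omega> @ Y \<omega>'))))"

text \<open>X_1 \<dashrightarrow> X_2 \<dashrightarrow> ... \<dashrightarrow> X_N (indices 1..N, X_j of dimension dd j):
  (X_1,...,X_i) \<dashrightarrow> X_{i+1} for i = 1..N-1.\<close>
definition seq_indep ::
  "'w measure set \<Rightarrow> (nat \<Rightarrow> 'w \<Rightarrow> real list) \<Rightarrow> (nat \<Rightarrow> nat) \<Rightarrow> nat \<Rightarrow> bool" where
  "seq_indep P X dd N \<longleftrightarrow>
     (\<forall>i. 1 \<le> i \<and> i < N \<longrightarrow>
        sl_indep P (\<lambda>\<omega>. concat (map (\<lambda>j. X j \<omega>) [1..<i+1])) (\<Sum>j\<in>{1..i}. dd j)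
                   (X (i+1)) (dd (i+1)))"

definition in_H :: "'w measure set \<Rightarrow> ('w \<Rightarrow> real) \<Rightarrow> bool" where
  "in_H P X \<longleftrightarrow> (\<forall>Q\<in>P. integrable Q X) \<and> bdd_above ((\<lambda>Q. integral\<^sup>L Q X) ` P)"

definition maximal_distributed ::
  "'w measure set \<Rightarrow> ('w \<Rightarrow> real) \<Rightarrow> real \<Rightarrow> real \<Rightarrow> bool" where
  "maximal_distributed P V lo hi \<longleftrightarrow>
     (\<forall>\<phi>. loc_lip_growth \<phi> \<longrightarrow>
        in_H P (\<lambda>\<omega>. \<phi> (V \<omega>)) \<and> sublin_E P (\<lambda>\<omega>. \<phi> (V \<omega>)) = (SUP v\<in>{lo..hi}. \<phi> v))"

definition std_normal_distributed :: "'w measure set \<Rightarrow> ('w \<Rightarrow> real) \<Rightarrow> bool" where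
  "std_normal_distributed P e \<longleftrightarrow>
     (\<forall>\<phi>. loc_lip_growth \<phi> \<longrightarrow>
        in_H P (\<lambda>\<omega>. \<phi> (e \<omega>)) \<and>
        sublin_E P (\<lambda>\<omega>. \<phi> (e \<omega>)) = (\<integral>x. \<phi> x * std_normal_density x \<partial>lborel))"

end

theory Submission
  imports Defs
begin

text \<open>Let \<open>H\<^sub>i\<close> be the history \<open>(V\<^sub>1, \<epsilon>\<^sub>1, \<dots>, V\<^sub>i, \<epsilon>\<^sub>i)\<close>. The chain
  \<open>V\<^sub>1 \<dashrightarrow> \<epsilon>\<^sub>1 \<dashrightarrow> \<dots> \<dashrightarrow> \<epsilon>\<^sub>n\<close> says \<open>H\<^sub>i \<dashrightarrow> V\<^sub>i\<^sub>+\<^sub>1\<close> and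
  \<open>(H\<^sub>i, V\<^sub>i\<^sub>+\<^sub>1) \<dashrightarrow> \<epsilon>\<^sub>i\<^sub>+\<^sub>1\<close>, while (F1) and (F2) say
  \<open>H\<^sub>i \<dashrightarrow> (V\<^sub>i\<^sub>+\<^sub>1, \<epsilon>\<^sub>i\<^sub>+\<^sub>1)\<close> and \<open>V\<^sub>i \<dashrightarrow> \<epsilon>\<^sub>i\<close>. Apart from projecting an
  independence onto sub-vectors, the two are linked by two composition rules:
  \<open>X \<dashrightarrow> Y\<close> and \<open>(X, Y) \<dashrightarrow> Z\<close> give \<open>X \<dashrightarrow> (Y, Z)\<close>, and \<open>X \<dashrightarrow> (Y, Z)\<close> and
  \<open>Y \<dashrightarrow> Z\<close> give \<open>(X, Y) \<dashrightarrow> Z\<close>. Both are proved by first integrating out \<open>Z\<close>,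
  which is legitimate because \<open>u \<mapsto> \<bbbE>[\<phi>(u, Z)]\<close> is again bounded Lipschitz,
  and then using the remaining independence.\<close>

definition list_sqdist :: "real list \<Rightarrow> real list \<Rightarrow> real" where
  "list_sqdist x y = sum_list (map (\<lambda>(a, b). (a - b)\<^sup>2) (zip x y))"

lemma list_dist_eq_sqrt_list_sqdist:
  "length x = length y \<Longrightarrow> list_dist x y = sqrt (list_sqdist x y)"
  unfolding list_dist_def list_sqdist_def by (simp add: sum_list_sum_nth atLeast0LessThan)

lemma list_sqdist_nonneg: "0 \<le> list_sqdist x y"
  unfolding list_sqdist_def by (rule sum_list_nonneg) auto

lemma list_sqdist_append:
  "length x = length y \<Longrightarrow> list_sqdist (x @ u) (y @ v) = list_sqdist x y + list_sqdist u v"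
  unfolding list_sqdist_def by simp

lemma list_sqdist_self: "list_sqdist u u = 0"
  unfolding list_sqdist_def by (induction u) auto

lemma list_sqdist_take_drop:
  "list_sqdist x y = list_sqdist (take d x) (take d y) + list_sqdist (drop d x) (drop d y)"
proof -
  have "list_sqdist x y = sum_list (map (\<lambda>(a, b). (a - b)\<^sup>2) (take d (zip x y) @ drop d (zip x y)))"
    unfolding list_sqdist_def by simp
  then show ?thesis
    unfolding list_sqdist_def by (simp only: map_append sum_list_append take_zip drop_zip)
qed

lemma list_dist_nonneg: "0 \<le> list_dist x y"
  unfolding list_dist_def by (simp add: sum_nonneg)

lemma list_dist_take_le:
  "length x = length y \<Longrightarrow> list_dist (take d x) (take d y) \<le> list_dist x y"
  using list_sqdist_take_drop[of x y d] list_sqdist_nonneg[of "drop d x" "drop d y"]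
  by (simp add: list_dist_eq_sqrt_list_sqdist)

lemma list_dist_drop_le:
  "length x = length y \<Longrightarrow> list_dist (drop d x) (drop d y) \<le> list_dist x y"
  using list_sqdist_take_drop[of x y d] list_sqdist_nonneg[of "take d x" "take d y"]
  by (simp add: list_dist_eq_sqrt_list_sqdist)

lemma list_dist_append_left_cancel:
  "length u = length v \<Longrightarrow> list_dist (x @ u) (x @ v) = list_dist u v"
  by (simp add: list_dist_eq_sqrt_list_sqdist list_sqdist_append list_sqdist_self)

lemma list_dist_append_right_cancel:
  "length u = length v \<Longrightarrow> list_dist (u @ w) (v @ w) = list_dist u v"
  by (simp add: list_dist_eq_sqrt_list_sqdist list_sqdist_append list_sqdist_self)

lemma list_dist_singleton: "list_dist [s] [t] = \<bar>s - t\<bar>"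
  by (simp add: list_dist_def)

lemma cblipI:
  assumes "\<And>x. length x = d \<Longrightarrow> \<bar>\<phi> x\<bar> \<le> B"
    and "\<And>x y. length x = d \<Longrightarrow> length y = d \<Longrightarrow> \<bar>\<phi> x - \<phi> y\<bar> \<le> L * list_dist x y"
  shows "cblip d \<phi>"
  unfolding cblip_def using assms by blast

lemma cblip_nonneg_Lipschitz_const:
  assumes "cblip d \<phi>"
  shows "\<exists>B L. (\<forall>x. length x = d \<longrightarrow> \<bar>\<phi> x\<bar> \<le> B) \<and> 0 \<le> L \<and>
    (\<forall>x y. length x = d \<longrightarrow> length y = d \<longrightarrow> \<bar>\<phi> x - \<phi> y\<bar> \<le> L * list_dist x y)"
proof -
  obtain B L where B: "\<And>x. length x = d \<Longrightarrow> \<bar>\<phi> x\<bar> \<le> B"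
    and L: "\<And>x y. length x = d \<Longrightarrow> length y = d \<Longrightarrow> \<bar>\<phi> x - \<phi> y\<bar> \<le> L * list_dist x y"
    using assms unfolding cblip_def by blast
  have "\<bar>\<phi> x - \<phi> y\<bar> \<le> max L 0 * list_dist x y" if "length x = d" "length y = d" for x y
  proof -
    have "L * list_dist x y \<le> max L 0 * list_dist x y"
      by (intro mult_right_mono list_dist_nonneg) simp
    with L[OF that] show ?thesis by linarith
  qed
  with B show ?thesis by (intro exI[of _ B] exI[of _ "max L 0"]) simp
qed

lemma cblip_take:
  assumes "cblip d \<phi>" and "d \<le> d'"
  shows "cblip d' (\<lambda>u. \<phi> (take d u))"
proof -
  obtain B L where B: "\<And>x. length x = d \<Longrightarrow> \<bar>\<phi> x\<bar> \<le> B" and "0 \<le> L"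
    and L: "\<And>x y. length x = d \<Longrightarrow> length y = d \<Longrightarrow> \<bar>\<phi> x - \<phi> y\<bar> \<le> L * list_dist x y"
    using cblip_nonneg_Lipschitz_const[OF assms(1)] by blast
  show ?thesis
  proof (rule cblipI)
    show "\<bar>\<phi> (take d x)\<bar> \<le> B" if "length x = d'" for x
      using that assms(2) by (intro B) simp
    show "\<bar>\<phi> (take d x) - \<phi> (take d y)\<bar> \<le> L * list_dist x y"
      if "length x = d'" "length y = d'" for x y
      using L[of "take d x" "take d y"] that assms(2)
        mult_left_mono[OF list_dist_take_le \<open>0 \<le> L\<close>, of x y d] by simp
  qed
qed

lemma cblip_drop:
  assumes "cblip k \<phi>"
  shows "cblip (m + k) (\<lambda>u. \<phi> (drop m u))"
proof -
  obtain B L where B: "\<And>x. length x = k \<Longrightarrow> \<bar>\<phi> x\<bar> \<le> B" and "0 \<le> L"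
    and L: "\<And>x y. length x = k \<Longrightarrow> length y = k \<Longrightarrow> \<bar>\<phi> x - \<phi> y\<bar> \<le> L * list_dist x y"
    using cblip_nonneg_Lipschitz_const[OF assms] by blast
  show ?thesis
  proof (rule cblipI)
    show "\<bar>\<phi> (drop m x)\<bar> \<le> B" if "length x = m + k" for x
      using that by (intro B) simp
    show "\<bar>\<phi> (drop m x) - \<phi> (drop m y)\<bar> \<le> L * list_dist x y"
      if "length x = m + k" "length y = m + k" for x y
      using L[of "drop m x" "drop m y"] that
        mult_left_mono[OF list_dist_drop_le \<open>0 \<le> L\<close>, of x y m] by simp
  qed
qed

lemma cblip_append_prefix:
  assumes "cblip (m + k) \<phi>" and "length x = m"
  shows "cblip k (\<lambda>u. \<phi> (x @ u))"
proof -
  obtain B L where B: "\<And>x. length x = m + k \<Longrightarrow> \<bar>\<phi> x\<bar> \<le> B"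
    and L: "\<And>x y. length x = m + k \<Longrightarrow> length y = m + k \<Longrightarrow> \<bar>\<phi> x - \<phi> y\<bar> \<le> L * list_dist x y"
    using assms(1) unfolding cblip_def by blast
  show ?thesis
  proof (rule cblipI)
    show "\<bar>\<phi> (x @ u)\<bar> \<le> B" if "length u = k" for u
      using that assms(2) by (intro B) simp
    show "\<bar>\<phi> (x @ u) - \<phi> (x @ v)\<bar> \<le> L * list_dist u v"
      if "length u = k" "length v = k" for u v
      using L[of "x @ u" "x @ v"] that assms(2) by (simp add: list_dist_append_left_cancel)
  qed
qed

lemma cblip_continuous_on_last:
  assumes "cblip (d + 1) \<phi>" and "length u = d"
  shows "continuous_on UNIV (\<lambda>t. \<phi> (u @ [t]))"
proof -
  obtain L where "0 \<le> L"
    and L: "\<And>x y. length x = d + 1 \<Longrightarrow> length y = d + 1 \<Longrightarrow> \<bar>\<phi> x - \<phi> y\<bar> \<le> L * list_dist x y"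
    using cblip_nonneg_Lipschitz_const[OF assms(1)] by blast
  have "L-lipschitz_on UNIV (\<lambda>t. \<phi> (u @ [t]))"
  proof (rule lipschitz_onI)
    show "dist (\<phi> (u @ [s])) (\<phi> (u @ [t])) \<le> L * dist s t" for s t
      using L[of "u @ [s]" "u @ [t]"] assms(2)
      by (simp add: dist_real_def list_dist_append_left_cancel list_dist_singleton)
  qed fact
  then show ?thesis by (rule lipschitz_on_continuous_on)
qed

lemma abs_SUP_le:
  fixes f :: "'a \<Rightarrow> real"
  assumes "A \<noteq> {}" and "\<And>x. x \<in> A \<Longrightarrow> \<bar>f x\<bar> \<le> B"
  shows "\<bar>SUP x\<in>A. f x\<bar> \<le> B"
proof -
  obtain x0 where x0: "x0 \<in> A" using assms(1) by blast
  have "bdd_above (f ` A)" using assms(2) by (intro bdd_aboveI[where M = B]) force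
  then have "f x0 \<le> (SUP x\<in>A. f x)" by (rule cSUP_upper[OF x0])
  moreover have "(SUP x\<in>A. f x) \<le> B" using assms by (intro cSUP_least) force+
  ultimately show ?thesis using assms(2)[OF x0] by linarith
qed

lemma abs_SUP_diff_le:
  fixes f g :: "'a \<Rightarrow> real"
  assumes "A \<noteq> {}" and "bdd_above (f ` A)" and "bdd_above (g ` A)"
    and "\<And>x. x \<in> A \<Longrightarrow> \<bar>f x - g x\<bar> \<le> c"
  shows "\<bar>(SUP x\<in>A. f x) - (SUP x\<in>A. g x)\<bar> \<le> c"
proof -
  have "f x \<le> (SUP x\<in>A. g x) + c" if "x \<in> A" for x
    using cSUP_upper[OF that assms(3)] assms(4)[OF that] by linarith
  then have "(SUP x\<in>A. f x) \<le> (SUP x\<in>A. g x) + c" by (intro cSUP_least[OF assms(1)])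
  moreover have "g x \<le> (SUP x\<in>A. f x) + c" if "x \<in> A" for x
    using cSUP_upper[OF that assms(2)] assms(4)[OF that] by linarith
  then have "(SUP x\<in>A. g x) \<le> (SUP x\<in>A. f x) + c" by (intro cSUP_least[OF assms(1)])
  ultimately show ?thesis by linarith
qed

locale sublinear_expectation =
  fixes P :: "'w measure set" and M :: "'w measure"
  assumes nonempty: "P \<noteq> {}"
    and prob_space_sets: "\<And>Q. Q \<in> P \<Longrightarrow> prob_space Q \<and> sets Q = sets M \<and> space Q = space M"
begin

lemma integrable_bounded_abs_integral_le:
  fixes h :: "'w \<Rightarrow> real"
  assumes "Q \<in> P" and "h \<in> borel_measurable M" and "\<And>\<omega>. \<bar>h \<omega>\<bar> \<le> B"
  shows "integrable Q h" and "\<bar>integral\<^sup>L Q h\<bar> \<le> B"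
proof -
  interpret prob_space Q using prob_space_sets[OF assms(1)] by blast
  have "h \<in> borel_measurable Q"
    by (subst measurable_cong_sets[of Q M borel borel]) (use prob_space_sets[OF assms(1)] assms(2) in auto)
  then show int: "integrable Q h"
    using assms(3) by (intro integrable_const_bound[where B = B]) auto
  have "\<bar>integral\<^sup>L Q h\<bar> \<le> integral\<^sup>L Q (\<lambda>\<omega>. \<bar>h \<omega>\<bar>)"
    by (rule integral_abs_bound)
  also have "\<dots> \<le> integral\<^sup>L Q (\<lambda>\<omega>. B)"
    using int assms(3) by (intro integral_mono) auto
  finally show "\<bar>integral\<^sup>L Q h\<bar> \<le> B" by (simp add: prob_space)
qed

lemma abs_sublin_E_le:
  assumes "h \<in> borel_measurable M" and "\<And>\<omega>. \<bar>h \<omega>\<bar> \<le> B"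
  shows "\<bar>sublin_E P h\<bar> \<le> B"
  unfolding sublin_E_def
  using assms by (intro abs_SUP_le[OF nonempty] integrable_bounded_abs_integral_le(2))

lemma abs_sublin_E_diff_le:
  assumes "h \<in> borel_measurable M" "h' \<in> borel_measurable M"
    and "\<And>\<omega>. \<bar>h \<omega>\<bar> \<le> B" "\<And>\<omega>. \<bar>h' \<omega>\<bar> \<le> B" "\<And>\<omega>. \<bar>h \<omega> - h' \<omega>\<bar> \<le> c"
  shows "\<bar>sublin_E P h - sublin_E P h'\<bar> \<le> c"
  unfolding sublin_E_def
proof (rule abs_SUP_diff_le[OF nonempty])
  have "bdd_above ((\<lambda>Q. integral\<^sup>L Q k) ` P)"
    if "k \<in> borel_measurable M" "\<And>\<omega>. \<bar>k \<omega>\<bar> \<le> B" for k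
    using that by (intro bdd_aboveI[where M = B])
      (auto intro: abs_le_D1[OF integrable_bounded_abs_integral_le(2)])
  with assms show "bdd_above ((\<lambda>Q. integral\<^sup>L Q h) ` P)" "bdd_above ((\<lambda>Q. integral\<^sup>L Q h') ` P)"
    by auto
  fix Q assume Q: "Q \<in> P"
  have "integral\<^sup>L Q h - integral\<^sup>L Q h' = integral\<^sup>L Q (\<lambda>\<omega>. h \<omega> - h' \<omega>)"
    using integrable_bounded_abs_integral_le(1)[OF Q assms(1,3)]
      integrable_bounded_abs_integral_le(1)[OF Q assms(2,4)]
    by (rule Bochner_Integration.integral_diff[symmetric])
  also have "\<bar>\<dots>\<bar> \<le> c"
    using Q borel_measurable_diff[OF assms(1,2)] assms(5) by (rule integrable_bounded_abs_integral_le(2))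
  finally show "\<bar>integral\<^sup>L Q h - integral\<^sup>L Q h'\<bar> \<le> c" .
qed

lemma cblip_sublin_E_append:
  assumes f: "f \<in> borel_measurable M" and \<phi>: "cblip (d + 1) \<phi>"
  shows "cblip d (\<lambda>u. sublin_E P (\<lambda>\<omega>. \<phi> (u @ [f \<omega>])))"
proof -
  obtain B L where B: "\<And>x. length x = d + 1 \<Longrightarrow> \<bar>\<phi> x\<bar> \<le> B" and "0 \<le> L"
    and L: "\<And>x y. length x = d + 1 \<Longrightarrow> length y = d + 1 \<Longrightarrow> \<bar>\<phi> x - \<phi> y\<bar> \<le> L * list_dist x y"
    using cblip_nonneg_Lipschitz_const[OF \<phi>] by blast
  have meas: "(\<lambda>\<omega>. \<phi> (u @ [f \<omega>])) \<in> borel_measurable M" if "length u = d" for u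
    using measurable_compose[OF f borel_measurable_continuous_onI[OF cblip_continuous_on_last]]
      \<phi> that by simp
  show ?thesis
  proof (rule cblipI)
    show "\<bar>sublin_E P (\<lambda>\<omega>. \<phi> (x @ [f \<omega>]))\<bar> \<le> B" if "length x = d" for x
      using that meas B by (intro abs_sublin_E_le) auto
    show "\<bar>sublin_E P (\<lambda>\<omega>. \<phi> (x @ [f \<omega>])) - sublin_E P (\<lambda>\<omega>. \<phi> (y @ [f \<omega>]))\<bar> \<le> L * list_dist x y"
      if "length x = d" "length y = d" for x y
    proof (rule abs_sublin_E_diff_le[where B = B])
      show "\<bar>\<phi> (x @ [f \<omega>]) - \<phi> (y @ [f \<omega>])\<bar> \<le> L * list_dist x y" for \<omega>
        using L[of "x @ [f \<omega>]" "y @ [f \<omega>]"] that by (simp add: list_dist_append_right_cancel)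
    qed (use that meas B in auto)
  qed
qed

end

lemma sl_indep_mono_right:
  assumes "sl_indep P X m (\<lambda>\<omega>. Y \<omega> @ Z \<omega>) (k + l)" and "\<And>\<omega>. length (X \<omega>) = m"
    and "\<And>\<omega>. length (Y \<omega>) = k" and "\<And>\<omega>. length (Z \<omega>) = l"
  shows "sl_indep P X m Y k"
  unfolding sl_indep_def
proof (intro allI impI)
  fix \<phi> assume "cblip (m + k) \<phi>"
  then have "cblip (m + (k + l)) (\<lambda>u. \<phi> (take (m + k) u))" by (rule cblip_take) simp
  from assms(1)[unfolded sl_indep_def, rule_format, OF this]
  show "sublin_E P (\<lambda>\<omega>. \<phi> (X \<omega> @ Y \<omega>)) = sublin_E P (\<lambda>\<omega>. sublin_E P (\<lambda>\<omega>'. \<phi> (X \<omega> @ Y \<omega>')))"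
    using assms(2-4) by simp
qed

lemma sl_indep_mono_left:
  assumes "sl_indep P (\<lambda>\<omega>. X \<omega> @ Y \<omega>) (m + k) Z l" and "\<And>\<omega>. length (X \<omega>) = m"
    and "\<And>\<omega>. length (Y \<omega>) = k"
  shows "sl_indep P Y k Z l"
  unfolding sl_indep_def
proof (intro allI impI)
  fix \<phi> assume "cblip (k + l) \<phi>"
  then have "cblip (m + k + l) (\<lambda>u. \<phi> (drop m u))"
    using cblip_drop[of "k + l" \<phi> m] by (simp add: add.assoc)
  from assms(1)[unfolded sl_indep_def, rule_format, OF this]
  show "sublin_E P (\<lambda>\<omega>. \<phi> (Y \<omega> @ Z \<omega>)) = sublin_E P (\<lambda>\<omega>. sublin_E P (\<lambda>\<omega>'. \<phi> (Y \<omega> @ Z \<omega>')))"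
    using assms(2,3) by simp
qed

lemma sl_indep_append_prefix:
  assumes "sl_indep P Y k Z l" and "cblip (m + (k + l)) \<phi>" and "length x = m"
  shows "sublin_E P (\<lambda>\<omega>. \<phi> (x @ Y \<omega> @ Z \<omega>)) =
         sublin_E P (\<lambda>\<omega>. sublin_E P (\<lambda>\<omega>'. \<phi> (x @ Y \<omega> @ Z \<omega>')))"
  using assms(1)[unfolded sl_indep_def, rule_format, OF cblip_append_prefix[OF assms(2,3)]] by simp

context sublinear_expectation
begin

lemma sl_indep_append_right:
  assumes XY: "sl_indep P X m Y k" and XY_f: "sl_indep P (\<lambda>\<omega>. X \<omega> @ Y \<omega>) (m + k) (\<lambda>\<omega>. [f \<omega>]) 1"
    and f: "f \<in> borel_measurable M"
    and lX: "\<And>\<omega>. length (X \<omega>) = m" and lY: "\<And>\<omega>. length (Y \<omega>) = k"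
  shows "sl_indep P X m (\<lambda>\<omega>. Y \<omega> @ [f \<omega>]) (k + 1)"
  unfolding sl_indep_def
proof (intro allI impI)
  fix \<phi> assume \<phi>: "cblip (m + (k + 1)) \<phi>"
  define g where "g u = sublin_E P (\<lambda>\<omega>'. \<phi> (u @ [f \<omega>']))" for u
  have g: "cblip (m + k) g"
    unfolding g_def using cblip_sublin_E_append[OF f, of "m + k" \<phi>] \<phi> by (simp add: add.assoc)
  have Y_f: "sl_indep P Y k (\<lambda>\<omega>. [f \<omega>]) 1"
    by (rule sl_indep_mono_left[OF XY_f lX lY])
  have "sublin_E P (\<lambda>\<omega>. \<phi> (X \<omega> @ Y \<omega> @ [f \<omega>])) = sublin_E P (\<lambda>\<omega>. g (X \<omega> @ Y \<omega>))"
    using XY_f \<phi> unfolding sl_indep_def g_def by (simp add: add.assoc)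
  also have "\<dots> = sublin_E P (\<lambda>\<omega>. sublin_E P (\<lambda>\<omega>'. g (X \<omega> @ Y \<omega>')))"
    using XY g unfolding sl_indep_def by blast
  also have "\<dots> = sublin_E P (\<lambda>\<omega>. sublin_E P (\<lambda>\<omega>'. \<phi> (X \<omega> @ Y \<omega>' @ [f \<omega>'])))"
    using sl_indep_append_prefix[OF Y_f \<phi> lX] unfolding g_def by simp
  finally show "sublin_E P (\<lambda>\<omega>. \<phi> (X \<omega> @ Y \<omega> @ [f \<omega>])) =
      sublin_E P (\<lambda>\<omega>. sublin_E P (\<lambda>\<omega>'. \<phi> (X \<omega> @ Y \<omega>' @ [f \<omega>'])))" .
qed

lemma sl_indep_append_left:
  assumes X_Yf: "sl_indep P X m (\<lambda>\<omega>. Y \<omega> @ [f \<omega>]) (k + 1)" and Y_f: "sl_indep P Y k (\<lambda>\<omega>. [f \<omega>]) 1"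
    and f: "f \<in> borel_measurable M"
    and lX: "\<And>\<omega>. length (X \<omega>) = m" and lY: "\<And>\<omega>. length (Y \<omega>) = k"
  shows "sl_indep P (\<lambda>\<omega>. X \<omega> @ Y \<omega>) (m + k) (\<lambda>\<omega>. [f \<omega>]) 1"
  unfolding sl_indep_def
proof (intro allI impI)
  fix \<phi> assume "cblip (m + k + 1) \<phi>"
  then have \<phi>: "cblip (m + (k + 1)) \<phi>" by (simp add: add.assoc)
  define g where "g u = sublin_E P (\<lambda>\<omega>'. \<phi> (u @ [f \<omega>']))" for u
  have g: "cblip (m + k) g"
    unfolding g_def using cblip_sublin_E_append[OF f, of "m + k" \<phi>] \<phi> by (simp add: add.assoc)
  have XY: "sl_indep P X m Y k"
    by (rule sl_indep_mono_right[OF X_Yf lX lY]) simp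
  have "sublin_E P (\<lambda>\<omega>. \<phi> ((X \<omega> @ Y \<omega>) @ [f \<omega>])) =
      sublin_E P (\<lambda>\<omega>. sublin_E P (\<lambda>\<omega>'. \<phi> (X \<omega> @ Y \<omega>' @ [f \<omega>'])))"
    using X_Yf \<phi> unfolding sl_indep_def by simp
  also have "\<dots> = sublin_E P (\<lambda>\<omega>. sublin_E P (\<lambda>\<omega>'. g (X \<omega> @ Y \<omega>')))"
    using sl_indep_append_prefix[OF Y_f \<phi> lX] unfolding g_def by simp
  also have "\<dots> = sublin_E P (\<lambda>\<omega>. g (X \<omega> @ Y \<omega>))"
    using XY g unfolding sl_indep_def by simp
  finally show "sublin_E P (\<lambda>\<omega>. \<phi> ((X \<omega> @ Y \<omega>) @ [f \<omega>])) =
      sublin_E P (\<lambda>\<omega>. sublin_E P (\<lambda>\<omega>'. \<phi> ((X \<omega> @ Y \<omega>) @ [f \<omega>'])))"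
    unfolding g_def by simp
qed

end

definition history :: "(nat \<Rightarrow> 'w \<Rightarrow> real list) \<Rightarrow> nat \<Rightarrow> 'w \<Rightarrow> real list" where
  "history X i \<omega> = concat (map (\<lambda>j. X j \<omega>) [1..<i + 1])"

lemma history_0 [simp]: "history X 0 \<omega> = []"
  by (simp add: history_def)

lemma history_Suc [simp]: "history X (Suc i) \<omega> = history X i \<omega> @ X (Suc i) \<omega>"
  by (simp add: history_def)

lemma seq_indep_const_dim_iff:
  "seq_indep P X (\<lambda>_. d) N \<longleftrightarrow>
   (\<forall>i. 1 \<le> i \<and> i < N \<longrightarrow> sl_indep P (history X i) (d * i) (X (Suc i)) d)"
  unfolding seq_indep_def history_def by (simp add: mult.commute)

definition interleave :: "(nat \<Rightarrow> 'w \<Rightarrow> real) \<Rightarrow> (nat \<Rightarrow> 'w \<Rightarrow> real) \<Rightarrow> nat \<Rightarrow> 'w \<Rightarrow> real list" where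
  "interleave X Y k \<omega> = (if odd k then [X ((k + 1) div 2) \<omega>] else [Y (k div 2) \<omega>])"

definition pair_seq :: "(nat \<Rightarrow> 'w \<Rightarrow> real) \<Rightarrow> (nat \<Rightarrow> 'w \<Rightarrow> real) \<Rightarrow> nat \<Rightarrow> 'w \<Rightarrow> real list" where
  "pair_seq X Y i \<omega> = [X i \<omega>, Y i \<omega>]"

lemma interleave_odd: "interleave X Y (Suc (2 * i)) = (\<lambda>\<omega>. [X (Suc i) \<omega>])"
  by (simp add: interleave_def fun_eq_iff)

lemma interleave_even: "interleave X Y (Suc (Suc (2 * i))) = (\<lambda>\<omega>. [Y (Suc i) \<omega>])"
  by (simp add: interleave_def fun_eq_iff)

lemma history_interleave_even: "history (interleave X Y) (2 * i) = history (pair_seq X Y) i"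
  by (induction i) (simp_all add: fun_eq_iff interleave_odd interleave_even pair_seq_def)

lemma history_interleave_odd:
  "history (interleave X Y) (Suc (2 * i)) = (\<lambda>\<omega>. history (pair_seq X Y) i \<omega> @ [X (Suc i) \<omega>])"
  by (simp add: fun_eq_iff history_interleave_even interleave_odd)

lemma length_history_pair_seq: "length (history (pair_seq X Y) i \<omega>) = 2 * i"
  by (induction i) (simp_all add: pair_seq_def)

lemma seq_indep_interleave_iff_steps:
  "seq_indep P (interleave X Y) (\<lambda>_. 1) (2 * n) \<longleftrightarrow>
   (\<forall>i<n. (1 \<le> i \<longrightarrow> sl_indep P (history (pair_seq X Y) i) (2 * i) (\<lambda>\<omega>. [X (Suc i) \<omega>]) 1) \<and>
          sl_indep P (\<lambda>\<omega>. history (pair_seq X Y) i \<omega> @ [X (Suc i) \<omega>]) (2 * i + 1)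
            (\<lambda>\<omega>. [Y (Suc i) \<omega>]) 1)"
proof -
  have split_parity: "(\<forall>j. 1 \<le> j \<and> j < 2 * n \<longrightarrow> Q j) \<longleftrightarrow>
      (\<forall>i<n. (1 \<le> i \<longrightarrow> Q (2 * i)) \<and> Q (Suc (2 * i)))" for Q :: "nat \<Rightarrow> bool"
  proof (intro iffI allI impI conjI)
    fix j assume "\<forall>i<n. (1 \<le> i \<longrightarrow> Q (2 * i)) \<and> Q (Suc (2 * i))" and "1 \<le> j \<and> j < 2 * n"
    then show "Q j" by (cases "even j") (auto elim!: evenE oddE)
  qed auto
  show ?thesis
    unfolding seq_indep_const_dim_iff split_parity
    by (simp add: interleave_odd interleave_even history_interleave_odd
        history_interleave_even del: history_Suc)
qed

lemma seq_indep_pair_seq_iff: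
  "seq_indep P (pair_seq X Y) (\<lambda>_. 2) n \<longleftrightarrow>
   (\<forall>i. 1 \<le> i \<and> i < n \<longrightarrow>
      sl_indep P (history (pair_seq X Y) i) (2 * i) (\<lambda>\<omega>. [X (Suc i) \<omega>] @ [Y (Suc i) \<omega>]) (1 + 1))"
proof -
  have "pair_seq X Y (Suc i) = (\<lambda>\<omega>. [X (Suc i) \<omega>] @ [Y (Suc i) \<omega>])" for i
    by (simp add: pair_seq_def fun_eq_iff)
  then show ?thesis by (simp only: seq_indep_const_dim_iff one_add_one)
qed

context sublinear_expectation
begin

lemma seq_indep_interleave_imp_pair_seq:
  assumes Y: "\<And>i. i \<in> {1..n} \<Longrightarrow> Y i \<in> borel_measurable M"
    and interleaved: "seq_indep P (interleave X Y) (\<lambda>_. 1) (2 * n)"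
  shows "seq_indep P (pair_seq X Y) (\<lambda>_. 2) n"
    and "\<forall>i\<in>{1..n}. sl_indep P (\<lambda>\<omega>. [X i \<omega>]) 1 (\<lambda>\<omega>. [Y i \<omega>]) 1"
proof -
  let ?H = "history (pair_seq X Y)"
  have H_X: "sl_indep P (?H i) (2 * i) (\<lambda>\<omega>. [X (Suc i) \<omega>]) 1" if "1 \<le> i" "i < n" for i
    using interleaved that unfolding seq_indep_interleave_iff_steps by blast
  have HX_Y: "sl_indep P (\<lambda>\<omega>. ?H i \<omega> @ [X (Suc i) \<omega>]) (2 * i + 1) (\<lambda>\<omega>. [Y (Suc i) \<omega>]) 1"
    if "i < n" for i
    using interleaved that unfolding seq_indep_interleave_iff_steps by blast
  show "seq_indep P (pair_seq X Y) (\<lambda>_. 2) n"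
    unfolding seq_indep_pair_seq_iff
  proof (intro allI impI)
    fix i assume i: "1 \<le> i \<and> i < n"
    show "sl_indep P (?H i) (2 * i) (\<lambda>\<omega>. [X (Suc i) \<omega>] @ [Y (Suc i) \<omega>]) (1 + 1)"
      using i by (intro sl_indep_append_right[OF H_X HX_Y Y]) (simp_all add: length_history_pair_seq)
  qed
  show "\<forall>i\<in>{1..n}. sl_indep P (\<lambda>\<omega>. [X i \<omega>]) 1 (\<lambda>\<omega>. [Y i \<omega>]) 1"
  proof
    fix i assume "i \<in> {1..n}"
    then obtain i' where "i = Suc i'" "i' < n" by (cases i) auto
    with sl_indep_mono_left[OF HX_Y length_history_pair_seq]
    show "sl_indep P (\<lambda>\<omega>. [X i \<omega>]) 1 (\<lambda>\<omega>. [Y i \<omega>]) 1" by simp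
  qed
qed

lemma seq_indep_pair_seq_imp_interleave:
  assumes Y: "\<And>i. i \<in> {1..n} \<Longrightarrow> Y i \<in> borel_measurable M"
    and pairs: "seq_indep P (pair_seq X Y) (\<lambda>_. 2) n"
    and X_Y: "\<forall>i\<in>{1..n}. sl_indep P (\<lambda>\<omega>. [X i \<omega>]) 1 (\<lambda>\<omega>. [Y i \<omega>]) 1"
  shows "seq_indep P (interleave X Y) (\<lambda>_. 1) (2 * n)"
proof -
  let ?H = "history (pair_seq X Y)"
  have H_XY: "sl_indep P (?H i) (2 * i) (\<lambda>\<omega>. [X (Suc i) \<omega>] @ [Y (Suc i) \<omega>]) (1 + 1)"
    if "1 \<le> i" "i < n" for i
    using pairs that unfolding seq_indep_pair_seq_iff by blast
  have "sl_indep P (\<lambda>\<omega>. ?H i \<omega> @ [X (Suc i) \<omega>]) (2 * i + 1) (\<lambda>\<omega>. [Y (Suc i) \<omega>]) 1"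
    if "i < n" for i
  proof (cases "i = 0")
    case True
    with X_Y that show ?thesis by simp
  next
    case False
    with that show ?thesis
      using X_Y by (intro sl_indep_append_left[OF H_XY _ Y]) (simp_all add: length_history_pair_seq)
  qed
  moreover have "sl_indep P (?H i) (2 * i) (\<lambda>\<omega>. [X (Suc i) \<omega>]) 1" if "1 \<le> i" "i < n" for i
    using H_XY[OF that] length_history_pair_seq by (rule sl_indep_mono_right) simp_all
  ultimately show ?thesis
    unfolding seq_indep_interleave_iff_steps by blast
qed

lemma seq_indep_interleave_iff:
  assumes "\<And>i. i \<in> {1..n} \<Longrightarrow> Y i \<in> borel_measurable M"
  shows "seq_indep P (interleave X Y) (\<lambda>_. 1) (2 * n) \<longleftrightarrow>
    seq_indep P (pair_seq X Y) (\<lambda>_. 2) n \<and>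
    (\<forall>i\<in>{1..n}. sl_indep P (\<lambda>\<omega>. [X i \<omega>]) 1 (\<lambda>\<omega>. [Y i \<omega>]) 1)"
  using seq_indep_interleave_imp_pair_seq[where X = X and Y = Y, OF assms]
    seq_indep_pair_seq_imp_interleave[where X = X and Y = Y, OF assms]
  by blast

end

theorem mainTheorem8:
  fixes M :: "'w measure" and P :: "'w measure set"
    and V \<epsilon> :: "nat \<Rightarrow> 'w \<Rightarrow> real" and n :: nat and lo hi :: real
  assumes P_nonempty: "P \<noteq> {}"
    and P_prob: "\<And>Q. Q \<in> P \<Longrightarrow> prob_space Q \<and> sets Q = sets M \<and> space Q = space M"
    and V_meas: "\<And>i. i \<in> {1..n} \<Longrightarrow> V i \<in> borel_measurable M"
    and e_meas: "\<And>i. i \<in> {1..n} \<Longrightarrow> \<epsilon> i \<in> borel_measurable M"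
    and sig: "0 \<le> lo" "lo \<le> hi"
    and V_dist: "\<And>i. i \<in> {1..n} \<Longrightarrow> maximal_distributed P (V i) lo hi"
    and e_dist: "\<And>i. i \<in> {1..n} \<Longrightarrow> std_normal_distributed P (\<epsilon> i)"
  shows "seq_indep P
            (\<lambda>k \<omega>. if odd k then [V ((k + 1) div 2) \<omega>] else [\<epsilon> (k div 2) \<omega>])
            (\<lambda>_. 1) (2 * n)
         \<longleftrightarrow>
         (seq_indep P (\<lambda>i \<omega>. [V i \<omega>, \<epsilon> i \<omega>]) (\<lambda>_. 2) n \<and>
          (\<forall>i\<in>{1..n}. sl_indep P (\<lambda>\<omega>. [V i \<omega>]) 1 (\<lambda>\<omega>. [\<epsilon> i \<omega>]) 1))"
proof -
  interpret sublinear_expectation P M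
    using P_nonempty P_prob by unfold_locales
  have "seq_indep P (interleave V \<epsilon>) (\<lambda>_. 1) (2 * n) \<longleftrightarrow>
      seq_indep P (pair_seq V \<epsilon>) (\<lambda>_. 2) n \<and>
      (\<forall>i\<in>{1..n}. sl_indep P (\<lambda>\<omega>. [V i \<omega>]) 1 (\<lambda>\<omega>. [\<epsilon> i \<omega>]) 1)"
    by (rule seq_indep_interleave_iff[where X = V and Y = \<epsilon>, OF e_meas])
  then show ?thesis
    unfolding interleave_def[abs_def] pair_seq_def[abs_def] .
qed

end
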